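(* Let $(X,\mu)$ be a standard probability space and let $T,U$ be measure-preserving Borel bijections of $(X,\mu)$ with disjoint supports. Suppose there are relatively prime integers $p,q\geq 2$ such that every $T$-orbit is finite with cardinality dividing a power of $p$, and every $U$-orbit is finite with cardinality dividing a power of $q$. Then both $T$ and $U$ belong to the closure, for the uniform topology, of the group generated by $TU$.
   Context: The support of $T$ is $\{x:T(x)\neq x\}$. The uniform topology on the group of measure-preserving bijections of $(X,\mu)$ (identified up to null sets) is given by the metric $d_u(T,U)=\mu(\{x:T(x)\neq U(x)\})$. *)

theory Defs
  imports "HOL-Probability.Probability"
begin

definition ipow :: "('a \<Rightarrow> 'a) \<Rightarrow> int \<Rightarrow> 'a \<Rightarrow> 'a" where
  "ipow T n = (if 0 \<le> n then T ^^ nat n else (inv T) ^^ nat (- n))"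

definition orbit_of :: "('a \<Rightarrow> 'a) \<Rightarrow> 'a \<Rightarrow> 'a set" where
  "orbit_of T x = range (\<lambda>n. ipow T n x)"

definition supp :: "('a \<Rightarrow> 'a) \<Rightarrow> 'a set" where
  "supp T = {x. T x \<noteq> x}"

definition mp_bij :: "'a measure \<Rightarrow> ('a \<Rightarrow> 'a) \<Rightarrow> bool" where
  "mp_bij M T \<longleftrightarrow> bij T \<and> T \<in> M \<rightarrow>\<^sub>M M \<and> distr M M T = M"

definition d_u :: "'a measure \<Rightarrow> ('a \<Rightarrow> 'a) \<Rightarrow> ('a \<Rightarrow> 'a) \<Rightarrow> real" where
  "d_u M T U = measure M {x \<in> space M. T x \<noteq> U x}"

definition cyclic_gen :: "('a \<Rightarrow> 'a) \<Rightarrow> ('a \<Rightarrow> 'a) set" where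
  "cyclic_gen V = range (\<lambda>n. ipow V n)"

definition in_uniform_closure :: "'a measure \<Rightarrow> ('a \<Rightarrow> 'a) set \<Rightarrow> ('a \<Rightarrow> 'a) \<Rightarrow> bool" where
  "in_uniform_closure M G S \<longleftrightarrow> (\<forall>e>0. \<exists>R\<in>G. d_u M S R < e)"

end

theory Submission
  imports Defs "HOL-Combinatorics.Orbits"
begin

text \<open>
  Disjoint supports make \<open>T\<close> and \<open>U\<close> commute, so \<open>(TU)\<^sup>n = T\<^sup>n U\<^sup>n\<close>. On the set \<open>A\<^sub>k\<close> of
  common fixed points of \<open>T\<^bsup>p^k\<^esup>\<close> and \<open>U\<^bsup>q^k\<^esup>\<close>, an exponent \<open>n\<close> with \<open>n \<equiv> 1 (mod p\<^sup>k)\<close> and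
  \<open>n \<equiv> 0 (mod q\<^sup>k)\<close> (Bezout) gives \<open>(TU)\<^sup>n = T\<close>, and symmetrically for \<open>U\<close>. The orbit
  hypotheses say that the sets \<open>A\<^sub>k\<close> increase to the whole space, so the measure of their
  complements, which bounds the uniform distance, tends to \<open>0\<close>.
\<close>

lemma ipow_of_nat [simp]: "ipow f (int n) = f ^^ n"
  by (simp add: ipow_def)

lemma funpow_in_orbit_of: "(f ^^ n) x \<in> orbit_of f x"
  unfolding orbit_of_def by (metis ipow_of_nat rangeI)

lemma funpow_in_cyclic_gen: "f ^^ n \<in> cyclic_gen f"
  unfolding cyclic_gen_def by (metis ipow_of_nat rangeI)

lemma funpow_fixed_if_dvd:
  assumes "(f ^^ m) x = x" "m dvd n"
  shows "(f ^^ n) x = x"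
  using funpow_mod_eq[OF assms(1), of n] assms(2) by simp

lemma funpow_power_fixed_mono:
  assumes "(f ^^ p ^ k) x = x" "k \<le> l"
  shows "(f ^^ p ^ l) x = x"
  using assms(1) by (rule funpow_fixed_if_dvd) (simp add: assms(2) le_imp_power_dvd)

lemma periodic_self_in_orbit:
  assumes "0 < m" "(f ^^ m) x = x"
  shows "x \<in> orbit f x"
  using assms by (auto simp: orbit_altdef intro!: exI[of _ m])

text \<open>At a point of period \<open>m\<close> the orbit under integer powers is the forward orbit,
  since \<open>f\<^sup>-\<^sup>j x = f\<^bsup>mj - j\<^esup> x\<close>.\<close>

lemma orbit_of_periodic:
  assumes "bij f" "0 < m" "(f ^^ m) x = x"
  shows "orbit_of f x = orbit f x"
proof -
  have self: "x \<in> orbit f x" using assms(2,3) by (rule periodic_self_in_orbit)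
  have "ipow f k x \<in> orbit f x" for k
  proof (cases "0 \<le> k")
    case True then show ?thesis using funpow_in_orbit[OF self] by (simp add: ipow_def)
  next
    case False
    define j where "j = nat (- k)"
    have "j + (m * j - j) = m * j" using assms(2) by (cases m) auto
    then have "(f ^^ j) ((f ^^ (m * j - j)) x) = (f ^^ (m * j)) x"
      by (metis funpow_add comp_apply)
    also have "\<dots> = x" using funpow_fixed_if_dvd[OF assms(3)] by simp
    finally have "inv (f ^^ j) x = (f ^^ (m * j - j)) x"
      by (rule inv_f_eq[OF bij_is_inj[OF bij_betw_funpow[OF assms(1)]]])
    then have "ipow f k x = (f ^^ (m * j - j)) x"
      using False by (simp add: ipow_def j_def inv_fn[OF assms(1)])
    then show ?thesis using funpow_in_orbit[OF self] by simp
  qed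
  with funpow_in_orbit_of show ?thesis
    unfolding orbit_of_def orbit_altdef_self_in[OF self] by auto
qed

lemma card_orbit_eq_funpow_dist1:
  assumes "x \<in> orbit f x"
  shows "card (orbit f x) = funpow_dist1 f x x"
  using card_image[OF inj_on_funpow_dist1[OF assms]] orbit_conv_funpow_dist1[OF assms] by simp

lemma funpow_fixed_if_card_orbit_of_dvd:
  assumes "bij f" "finite (orbit_of f x)" "card (orbit_of f x) dvd n"
  shows "(f ^^ n) x = x"
proof -
  have "{y. \<exists>n. y = (f ^^ n) x} \<subseteq> orbit_of f x"
    using funpow_in_orbit_of by auto
  then obtain m where m: "0 < m" "(f ^^ m) x = x"
    using funpow_inj_finite[OF bij_is_inj[OF assms(1)]] finite_subset[OF _ assms(2)] by blast
  then have self: "x \<in> orbit f x" by (rule periodic_self_in_orbit)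
  have "card (orbit_of f x) = funpow_dist1 f x x"
    using orbit_of_periodic[OF assms(1) m] card_orbit_eq_funpow_dist1[OF self] by simp
  with assms(3) have "funpow_dist1 f x x dvd n" by simp
  then show ?thesis by (rule funpow_fixed_if_dvd[OF funpow_dist1_prop[OF self]])
qed

lemma eventually_funpow_power_fixed:
  assumes "bij f" "finite (orbit_of f x)" "card (orbit_of f x) dvd p ^ k"
  shows "\<forall>\<^sub>F l in sequentially. (f ^^ p ^ l) x = x"
  unfolding eventually_sequentially
proof (intro exI allI impI)
  fix l assume "k \<le> l"
  then have "card (orbit_of f x) dvd p ^ l"
    using assms(3) by (meson dvd_trans le_imp_power_dvd)
  then show "(f ^^ p ^ l) x = x"
    by (rule funpow_fixed_if_card_orbit_of_dvd[OF assms(1,2)])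
qed

lemma comp_commute_if_disjoint_supp:
  assumes "inj f" "inj g" "supp f \<inter> supp g = {}"
  shows "f \<circ> g = g \<circ> f"
proof
  fix x
  have swap: "f (g y) = g (f y)"
    if "y \<in> supp f" "inj f" "supp f \<inter> supp g = {}" for f g :: "'a \<Rightarrow> 'a" and y
  proof -
    have "f y \<in> supp f" using that(1,2) by (auto simp: supp_def dest: injD)
    then have "g y = y" "g (f y) = f y" using that(1,3) unfolding supp_def by blast+
    then show ?thesis by simp
  qed
  consider "x \<in> supp f" | "x \<in> supp g" | "f x = x" "g x = x" unfolding supp_def by blast
  then show "(f \<circ> g) x = (g \<circ> f) x"
  proof cases
    case 1 then show ?thesis using swap[of x f g] assms(1,3) by simp
  next
    case 2 then show ?thesis using swap[of x g f] assms(2,3) by (simp add: Int_commute)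
  qed simp
qed

lemma funpow_commute_if_comp_commute:
  assumes "f \<circ> g = g \<circ> f"
  shows "(f ^^ n) (g x) = g ((f ^^ n) x)"
proof (induction n)
  case (Suc n)
  then show ?case using fun_cong[OF assms, of "(f ^^ n) x"] by simp
qed simp

lemma funpow_comp_if_comp_commute:
  assumes "f \<circ> g = g \<circ> f"
  shows "((f \<circ> g) ^^ n) x = (f ^^ n) ((g ^^ n) x)"
proof (induction n arbitrary: x)
  case (Suc n)
  then show ?case by (simp add: funpow_commute_if_comp_commute[OF assms])
qed simp

lemma cyclic_gen_comp_agrees_with_factor:
  assumes "f \<circ> g = g \<circ> f" "coprime a b" "b \<noteq> 0"
  shows "\<exists>R\<in>cyclic_gen (f \<circ> g). \<forall>x. (f ^^ a) x = x \<longrightarrow> (g ^^ b) x = x \<longrightarrow> R x = f x"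
proof -
  obtain s t where st: "b * s = a * t + 1"
    using bezout_nat[OF assms(3), of a] assms(2) by (auto simp: coprime_commute)
  have "((f \<circ> g) ^^ (b * s)) x = f x" if f: "(f ^^ a) x = x" and g: "(g ^^ b) x = x" for x
  proof -
    have "(f ^^ (b * s)) x = (f ^^ ((a * t + 1) mod a)) x"
      using funpow_mod_eq[OF f, of "a * t + 1"] by (simp only: st)
    also have "\<dots> = (f ^^ (1 mod a)) x" by (simp only: mod_mult_self4)
    also have "\<dots> = f x" using funpow_mod_eq[OF f, of 1] by simp
    finally have "(f ^^ (b * s)) x = f x" .
    moreover have "(g ^^ (b * s)) x = x" using funpow_fixed_if_dvd[OF g] by simp
    ultimately show ?thesis by (simp add: funpow_comp_if_comp_commute[OF assms(1)])
  qed
  then show ?thesis using funpow_in_cyclic_gen by blast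
qed

lemma sets_fixed_points_funpow:
  fixes f :: "'a::{second_countable_topology, t2_space} \<Rightarrow> 'a"
  assumes "sets M = sets borel" "f \<in> M \<rightarrow>\<^sub>M M"
  shows "{x. (f ^^ n) x = x} \<in> sets M"
proof -
  have "f ^^ n \<in> borel_measurable M"
    using measurable_compose_n[OF assms(2)] measurable_cong_sets[OF refl assms(1)] by blast
  then have "{x \<in> space M. (f ^^ n) x = id x} \<in> sets M"
    using assms(1) by (intro measurable_equality_set measurable_ident_sets) auto
  then show ?thesis using sets_eq_imp_space_eq[OF assms(1)] by simp
qed

lemma in_uniform_closure_if_agrees_on_exhaustion:
  assumes "finite_measure M" "\<And>k. A k \<in> sets M" "incseq A"
    and "\<And>x. x \<in> space M \<Longrightarrow> \<forall>\<^sub>F k in sequentially. x \<in> A k"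
    and "\<And>k. \<exists>R\<in>G. \<forall>x\<in>A k. R x = S x"
  shows "in_uniform_closure M G S"
  unfolding in_uniform_closure_def
proof (intro allI impI)
  interpret finite_measure M by fact
  fix e :: real assume "0 < e"
  let ?B = "\<lambda>k. space M - A k"
  have "\<exists>k. x \<in> A k" if "x \<in> space M" for x
    using assms(4)[OF that] unfolding eventually_sequentially by (blast intro: order.refl)
  then have empty: "(\<Inter>k. ?B k) = {}" by blast
  have "(\<lambda>k. measure M (?B k)) \<longlonglongrightarrow> measure M (\<Inter>k. ?B k)"
    using assms(2,3) by (intro finite_Lim_measure_decseq) (auto simp: decseq_def incseq_def)
  then have "(\<lambda>k. measure M (?B k)) \<longlonglongrightarrow> 0" unfolding empty by simp
  then have "\<forall>\<^sub>F k in sequentially. measure M (?B k) < e"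
    using \<open>0 < e\<close> by (rule order_tendstoD(2))
  then obtain k where k: "measure M (?B k) < e" by (auto simp: eventually_sequentially)
  obtain R where R: "R \<in> G" "\<forall>x\<in>A k. R x = S x" using assms(5) by blast
  then have "{x \<in> space M. S x \<noteq> R x} \<subseteq> ?B k" by auto
  then have "d_u M S R \<le> measure M (?B k)"
    unfolding d_u_def using assms(2) by (intro finite_measure_mono) auto
  with k R(1) show "\<exists>R\<in>G. d_u M S R < e" by force
qed

theorem lemma6p1:
  fixes M :: "'a::polish_space measure" and T U :: "'a \<Rightarrow> 'a" and p q :: nat
  assumes "prob_space M" and "sets M = sets borel"
    and "mp_bij M T" and "mp_bij M U"
    and "supp T \<inter> supp U = {}"
    and "p \<ge> 2" and "q \<ge> 2" and "coprime p q"
    and "\<forall>x. finite (orbit_of T x) \<and> (\<exists>k. card (orbit_of T x) dvd p ^ k)"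
    and "\<forall>x. finite (orbit_of U x) \<and> (\<exists>k. card (orbit_of U x) dvd q ^ k)"
  shows "in_uniform_closure M (cyclic_gen (T \<circ> U)) T \<and> in_uniform_closure M (cyclic_gen (T \<circ> U)) U"
proof -
  interpret prob_space M by fact
  have bij: "bij T" "bij U" and meas: "T \<in> M \<rightarrow>\<^sub>M M" "U \<in> M \<rightarrow>\<^sub>M M"
    using assms(3,4) by (auto simp: mp_bij_def)
  have comm: "T \<circ> U = U \<circ> T"
    using comp_commute_if_disjoint_supp[OF bij_is_inj[OF bij(1)] bij_is_inj[OF bij(2)] assms(5)] .
  define A where "A k = {x. (T ^^ p ^ k) x = x} \<inter> {x. (U ^^ q ^ k) x = x}" for k
  have sets_A: "A k \<in> sets M" for k
    unfolding A_def using sets_fixed_points_funpow[OF assms(2)] meas by blast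
  have "A k \<subseteq> A l" if "k \<le> l" for k l
    unfolding A_def using funpow_power_fixed_mono[where f = T and p = p, OF _ that]
      funpow_power_fixed_mono[where f = U and p = q, OF _ that] by blast
  then have incseq_A: "incseq A" by (rule incseq_SucI) simp
  have eventually_A: "\<forall>\<^sub>F k in sequentially. x \<in> A k" for x
  proof -
    have "\<forall>\<^sub>F k in sequentially. (T ^^ p ^ k) x = x"
      using assms(9) eventually_funpow_power_fixed[OF bij(1)] by blast
    moreover have "\<forall>\<^sub>F k in sequentially. (U ^^ q ^ k) x = x"
      using assms(10) eventually_funpow_power_fixed[OF bij(2)] by blast
    ultimately show ?thesis by (simp add: A_def eventually_conj_iff)
  qed
  have agree_T: "\<exists>R\<in>cyclic_gen (T \<circ> U). \<forall>x\<in>A k. R x = T x" for k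
    using cyclic_gen_comp_agrees_with_factor[OF comm, of "p ^ k" "q ^ k"] assms(7,8)
    unfolding A_def by auto
  have agree_U: "\<exists>R\<in>cyclic_gen (T \<circ> U). \<forall>x\<in>A k. R x = U x" for k
    using cyclic_gen_comp_agrees_with_factor[OF comm[symmetric], of "q ^ k" "p ^ k"] assms(6,8)
    unfolding A_def comm by (auto simp: coprime_commute)
  note exhaustion = finite_measure_axioms sets_A incseq_A eventually_A
  show ?thesis
    using in_uniform_closure_if_agrees_on_exhaustion[OF exhaustion agree_T]
      in_uniform_closure_if_agrees_on_exhaustion[OF exhaustion agree_U] by simp
qed

end
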